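(* Any sequence $\{f_n\}\subset\mathcal{B}^-_d$ has a subsequence converging algebraically to some $f\in\overline{\mathrm{Rat}_d^-}$ such that $e^{i\theta}\varphi_f\in\mathcal{B}^-_k$ for some $\theta\in\mathbb{R}$ and some $1\le k\le d$. More generally, for $K\ge0$, any sequence of degree $d$ proper anti-holomorphic maps $f_n:\mathbb{D}\to\mathbb{D}$ with $d_{\mathbb{D}}(0,f_n(0))\le K$ has a subsequence converging algebraically to some $f\in\overline{\mathrm{Rat}_d^-}$ of degree $\ge1$.
   Context: $\mathcal{B}^-_k=\{\bar z\prod_{i=1}^{k-1}\frac{\bar z-a_i}{1-\overline{a_iz}}:|a_i|<1\}$; $d_{\mathbb{D}}$ is the hyperbolic metric on $\mathbb{D}$; proper anti-holomorphic self-maps of $\mathbb{D}$ are viewed as anti-rational maps via Schwarz reflection. Writing an anti-rational map of degree $d$ as $(P:Q)$ with $P,Q$ homogeneous anti-polynomials of degree $d$ without common factor identifies $\mathrm{Rat}_d^-$ with $\mathbb{P}^{2d+1}\setminus V(\mathrm{Res})$; its closure $\overline{\mathrm{Rat}_d^-}=\mathbb{P}^{2d+1}$ is the algebraic compactification. For $f=(P:Q)=(Hp:Hq)\in\overline{\mathrm{Rat}_d^-}$ with $H=\gcd(P,Q)$, set $\varphi_f=(p:q)$; the degree of $f$ means the degree of $\varphi_f$. Algebraic convergence means convergence in $\mathbb{P}^{2d+1}$. *)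

theory Defs
  imports "HOL-Complex_Analysis.Complex_Analysis" "HOL-Computational_Algebra.Polynomial_Factorial" "HOL-Computational_Algebra.Field_as_Ring"
begin

text \<open>A point of P^{2d+1} is represented by a pair (p,q) of one-variable complex
polynomials of degree at most d, not both zero; the homogeneous anti-polynomials are
P(X,Y) = Y^d p(X/Y), Q(X,Y) = Y^d q(X/Y) in the conjugated variables, so the 2d+2
homogeneous coordinates are exactly the coefficients of p and q up to degree d.
The anti-rational map is z \<mapsto> p(cnj z)/q(cnj z).\<close>

definition proj_pt :: "nat \<Rightarrow> complex poly \<times> complex poly \<Rightarrow> bool" where
  "proj_pt d v \<longleftrightarrow> degree (fst v) \<le> d \<and> degree (snd v) \<le> d \<and> v \<noteq> (0, 0)"

text \<open>Algebraic convergence: convergence in P^{2d+1} (quotient topology of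
C^{2d+2} minus 0), i.e. suitable rescalings of the coordinate vectors converge.\<close>
definition alg_conv :: "nat \<Rightarrow> (nat \<Rightarrow> complex poly \<times> complex poly) \<Rightarrow> complex poly \<times> complex poly \<Rightarrow> bool" where
  "alg_conv d s v \<longleftrightarrow> (\<forall>n. proj_pt d (s n)) \<and> proj_pt d v \<and>
     (\<exists>c::nat \<Rightarrow> complex. (\<forall>n. c n \<noteq> 0) \<and>
        (\<forall>i\<le>d. (\<lambda>n. c n * coeff (fst (s n)) i) \<longlonglongrightarrow> coeff (fst v) i \<and>
                (\<lambda>n. c n * coeff (snd (s n)) i) \<longlonglongrightarrow> coeff (snd v) i))"

definition phi :: "complex poly \<times> complex poly \<Rightarrow> complex poly \<times> complex poly" where
  "phi v = (fst v div gcd (fst v) (snd v), snd v div gcd (fst v) (snd v))"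

definition map_degree :: "complex poly \<times> complex poly \<Rightarrow> nat" where
  "map_degree v = max (degree (fst (phi v))) (degree (snd (phi v)))"

text \<open>The pair of (dehomogenised) anti-polynomials of
 z \<mapsto> cnj z * prod_i (cnj z - a_i)/(1 - cnj (a_i z)), written in w = cnj z.\<close>
definition blaschke_pair :: "complex list \<Rightarrow> complex poly \<times> complex poly" where
  "blaschke_pair as = ([:0, 1:] * (\<Prod>a\<leftarrow>as. [:- a, 1:]), (\<Prod>a\<leftarrow>as. [:1, - cnj a:]))"

definition in_Bminus :: "nat \<Rightarrow> complex poly \<times> complex poly \<Rightarrow> bool" where
  "in_Bminus k v \<longleftrightarrow> (\<exists>as. length as = k - 1 \<and> (\<forall>a\<in>set as. norm a < 1) \<and>
      (\<exists>c. c \<noteq> 0 \<and> fst v = smult c (fst (blaschke_pair as)) \<and> snd v = smult c (snd (blaschke_pair as))))"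

definition hyp_dist :: "complex \<Rightarrow> complex \<Rightarrow> real" where
  "hyp_dist z w = (let r = norm (z - w) / norm (1 - cnj z * w) in ln ((1 + r) / (1 - r)))"

definition proper_antihol_deg :: "nat \<Rightarrow> (complex \<Rightarrow> complex) \<Rightarrow> bool" where
  "proper_antihol_deg d f \<longleftrightarrow>
     (\<lambda>z. cnj (f z)) holomorphic_on ball 0 1 \<and> f ` ball 0 1 \<subseteq> ball 0 1 \<and>
     (\<forall>C. compact C \<and> C \<subseteq> ball 0 1 \<longrightarrow> compact {z \<in> ball 0 1. f z \<in> C}) \<and>
     (\<forall>w\<in>ball 0 1. finite {z \<in> ball 0 1. f z = w} \<and>
        (\<Sum>z\<in>{z \<in> ball 0 1. f z = w}. zorder (\<lambda>x. cnj (f x) - cnj w) z) = int d)"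

text \<open>(p,q) is the point of Rat_d^- obtained from f by Schwarz reflection: a reduced
 degree-d anti-rational map agreeing with f on the disc.\<close>
definition anti_rat_rep :: "nat \<Rightarrow> (complex \<Rightarrow> complex) \<Rightarrow> complex poly \<times> complex poly \<Rightarrow> bool" where
  "anti_rat_rep d f v \<longleftrightarrow> coprime (fst v) (snd v) \<and>
     max (degree (fst v)) (degree (snd v)) = d \<and>
     (\<forall>z\<in>ball 0 1. poly (snd v) (cnj z) \<noteq> 0 \<and> f z = poly (fst v) (cnj z) / poly (snd v) (cnj z))"

end

theory Submission
  imports Defs "HOL-Computational_Algebra.Fundamental_Theorem_Algebra"
begin

text \<open>A map in \<open>B\<^sup>-\<^sub>d\<close> is determined by its \<open>d - 1\<close> parameters in the disc, and the
  coefficients of its numerator and denominator depend continuously on them. By compactness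
  of the closed disc a subsequence of parameters converges, and with it the coefficient
  vectors. A parameter \<open>b\<close> that reaches the circle contributes the factor \<open>z - b\<close> to the
  numerator and \<open>1 - b\<^sup>* z = -b\<^sup>* (z - b)\<close> to the denominator; cancelling these common
  factors leaves a rotated Blaschke product of lower degree.

  A proper anti-holomorphic self-map \<open>f\<close> of degree \<open>d\<close> is again of this form: \<open>g = f\<^sup>*\<close> is
  holomorphic with \<open>d\<close> zeros counted with multiplicity and \<open>|g| \<rightarrow> 1\<close> at the circle, so
  dividing \<open>g\<close> by the Blaschke product \<open>B\<close> with the same zeros gives a zero-free function
  \<open>g / B\<close> whose modulus tends to 1; by the maximum principle for it and for its inverse it is
  a unimodular constant. The same compactness argument, with the rotation as an extra
  parameter, gives a convergent subsequence. The bound on \<open>d\<^sub>\<bbbD>(0, f\<^sub>n(0))\<close> keeps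
  \<open>|f\<^sub>n(0)|\<close>, the modulus of the product of the zeros, away from 1, so at least one zero of
  the limit stays inside the disc and survives the cancellation.\<close>

section \<open>Numerators and denominators of Blaschke products\<close>

definition root_poly :: "complex list \<Rightarrow> complex poly" where
  "root_poly as = (\<Prod>a\<leftarrow>as. [:- a, 1:])"

definition reflected_root_poly :: "complex list \<Rightarrow> complex poly" where
  "reflected_root_poly as = (\<Prod>a\<leftarrow>as. [:1, - cnj a:])"

lemma blaschke_pair_eq: "blaschke_pair as = ([:0, 1:] * root_poly as, reflected_root_poly as)"
  by (simp add: blaschke_pair_def root_poly_def reflected_root_poly_def)

lemma root_poly_Nil [simp]: "root_poly [] = 1"
  and root_poly_Cons: "root_poly (a # as) = [:- a, 1:] * root_poly as"
  and reflected_root_poly_Nil [simp]: "reflected_root_poly [] = 1"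
  and reflected_root_poly_Cons: "reflected_root_poly (a # as) = [:1, - cnj a:] * reflected_root_poly as"
  by (simp_all add: root_poly_def reflected_root_poly_def)

lemma poly_root_poly: "poly (root_poly as) x = (\<Prod>a\<leftarrow>as. x - a)"
  by (induction as) (simp_all add: root_poly_Cons algebra_simps)

lemma poly_reflected_root_poly: "poly (reflected_root_poly as) x = (\<Prod>a\<leftarrow>as. 1 - cnj a * x)"
  by (induction as) (simp_all add: reflected_root_poly_Cons algebra_simps)

lemma lead_coeff_root_poly [simp]: "lead_coeff (root_poly as) = 1"
  by (induction as) (simp_all add: root_poly_Cons lead_coeff_mult del: mult_pCons_left)

lemma root_poly_neq_0 [simp]: "root_poly as \<noteq> 0"
  using lead_coeff_root_poly[of as] by (metis leading_coeff_0_iff zero_neq_one)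

lemma degree_root_poly [simp]: "degree (root_poly as) = length as"
  by (induction as) (simp_all add: root_poly_Cons degree_mult_eq del: mult_pCons_left)

lemma degree_reflected_root_poly_le: "degree (reflected_root_poly as) \<le> length as"
proof (induction as)
  case (Cons a as)
  have "degree (reflected_root_poly (a # as)) \<le> degree [:1, - cnj a:] + degree (reflected_root_poly as)"
    unfolding reflected_root_poly_Cons by (rule degree_mult_le)
  also have "\<dots> \<le> 1 + length as"
    using Cons.IH by (intro add_mono) auto
  finally show ?case by simp
qed simp

lemma prod_list_filter_split:
  fixes f :: "'a \<Rightarrow> 'b::comm_monoid_mult"
  shows "(\<Prod>x\<leftarrow>xs. f x) = (\<Prod>x\<leftarrow>filter P xs. f x) * (\<Prod>x\<leftarrow>filter (\<lambda>x. \<not> P x) xs. f x)"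
  by (induction xs) (auto simp: mult_ac)

lemma root_poly_filter_split:
  "root_poly as = root_poly (filter P as) * root_poly (filter (\<lambda>a. \<not> P a) as)"
  unfolding root_poly_def by (rule prod_list_filter_split)

lemma reflected_root_poly_filter_split:
  "reflected_root_poly as =
     reflected_root_poly (filter P as) * reflected_root_poly (filter (\<lambda>a. \<not> P a) as)"
  unfolding reflected_root_poly_def by (rule prod_list_filter_split)

lemma reflected_root_poly_unimodular:
  assumes "\<forall>b\<in>set bs. norm b = 1"
  shows "reflected_root_poly bs = smult (\<Prod>b\<leftarrow>bs. - cnj b) (root_poly bs)"
  using assms
proof (induction bs)
  case (Cons b bs)
  let ?c = "\<Prod>b\<leftarrow>bs. - cnj b"
  have "cnj b * b = 1"
    using Cons.prems complex_norm_square[of b] by (simp add: mult.commute)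
  then have "[:1, - cnj b:] = smult (- cnj b) [:- b, 1:]"
    by simp
  then have "reflected_root_poly (b # bs) = smult (- cnj b) [:- b, 1:] * smult ?c (root_poly bs)"
    using Cons by (simp only: reflected_root_poly_Cons) simp
  also have "\<dots> = smult (?c * - cnj b) ([:- b, 1:] * root_poly bs)"
    by (simp only: mult_smult_left mult_smult_right smult_smult)
  finally show ?case
    by (simp only: root_poly_Cons prod_list.Cons list.map mult.commute[of "- cnj b"])
qed simp

lemma one_minus_cnj_mult_neq_0:
  assumes "norm a < 1" "norm x \<le> 1"
  shows "1 - cnj a * x \<noteq> 0"
proof
  assume "1 - cnj a * x = 0"
  then have "norm (cnj a * x) = 1"
    by simp
  moreover have "norm a * norm x \<le> norm a * 1"
    using assms(2) by (intro mult_left_mono) auto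
  ultimately show False
    using assms(1) by (simp add: norm_mult)
qed

lemma poly_reflected_root_poly_neq_0:
  assumes "\<forall>a\<in>set as. norm a < 1" "norm x \<le> 1"
  shows "poly (reflected_root_poly as) x \<noteq> 0"
proof -
  have "1 - cnj a * x \<noteq> 0" if "a \<in> set as" for a
    using assms that by (intro one_minus_cnj_mult_neq_0) auto
  then show ?thesis
    by (auto simp: poly_reflected_root_poly prod_list_zero_iff)
qed

lemma coprime_poly_if_no_common_root:
  fixes p q :: "complex poly"
  assumes "\<And>x. poly p x = 0 \<Longrightarrow> poly q x \<noteq> 0"
  shows "coprime p q"
proof (rule ccontr)
  assume "\<not> coprime p q"
  then have "\<not> is_unit (gcd p q)"
    by (simp add: coprime_iff_gcd_eq_1 is_unit_gcd)
  moreover have "gcd p q \<noteq> 0"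
    using assms[of 0] by auto
  ultimately have "degree (gcd p q) > 0"
    using is_unit_iff_degree by blast
  then obtain x where "poly (gcd p q) x = 0"
    using alg_closed_imp_poly_has_root by blast
  then have "poly p x = 0" "poly q x = 0"
    by (meson dvd_trans gcd_dvd1 gcd_dvd2 poly_eq_0_iff_dvd)+
  with assms show False
    by blast
qed

lemma normalize_monic_poly:
  fixes e :: "complex poly"
  assumes "lead_coeff e = 1"
  shows "normalize e = e"
proof -
  have "unit_factor e = 1"
    using assms by (simp add: unit_factor_poly_def one_pCons)
  then show ?thesis
    using normalize_mult_unit_factor[of e] by simp
qed

lemma phi_mult_monic:
  fixes p q e :: "complex poly"
  assumes "coprime p q" "lead_coeff e = 1"
  shows "phi (p * e, q * e) = (p, q)"
proof -
  have "e \<noteq> 0"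
    using assms(2) by auto
  moreover have "gcd (p * e) (q * e) = e"
    using assms gcd_mult_right[of p e q]
    by (simp add: coprime_commute coprime_iff_gcd_eq_1 normalize_monic_poly)
  ultimately show ?thesis
    by (simp add: phi_def)
qed

lemma phi_blaschke_pair:
  assumes "\<forall>a\<in>set as. norm a \<le> 1"
  defines "zs \<equiv> filter (\<lambda>a. norm a < 1) as" and "us \<equiv> filter (\<lambda>a. \<not> norm a < 1) as"
  shows "phi (blaschke_pair as) =
    ([:0, 1:] * root_poly zs, smult (\<Prod>b\<leftarrow>us. - cnj b) (reflected_root_poly zs))"
proof -
  let ?c = "\<Prod>b\<leftarrow>us. - cnj b"
  have us: "\<forall>b\<in>set us. norm b = 1"
    using assms(1) unfolding us_def by force
  have zs: "\<forall>a\<in>set zs. norm a < 1"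
    unfolding zs_def by auto
  have "?c \<noteq> 0"
    using us by (induction us) auto
  have fst: "fst (blaschke_pair as) = ([:0, 1:] * root_poly zs) * root_poly us"
    using root_poly_filter_split[of as "\<lambda>a. norm a < 1"]
    by (simp add: blaschke_pair_eq zs_def us_def mult.assoc)
  have snd: "snd (blaschke_pair as) = smult ?c (reflected_root_poly zs) * root_poly us"
    using reflected_root_poly_filter_split[of as "\<lambda>a. norm a < 1"]
      reflected_root_poly_unimodular[OF us]
    by (simp add: blaschke_pair_eq zs_def us_def)
  have "coprime ([:0, 1:] * root_poly zs) (smult ?c (reflected_root_poly zs))"
  proof (rule coprime_poly_if_no_common_root)
    fix x
    assume "poly ([:0, 1:] * root_poly zs) x = 0"
    then have "norm x \<le> 1"
      using zs by (auto simp: poly_root_poly prod_list_zero_iff)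
    then show "poly (smult ?c (reflected_root_poly zs)) x \<noteq> 0"
      using \<open>?c \<noteq> 0\<close> poly_reflected_root_poly_neq_0[OF zs] by simp
  qed
  then show ?thesis
    using phi_mult_monic[of _ _ "root_poly us"] fst snd
    by (metis lead_coeff_root_poly prod.collapse)
qed

lemma rotated_phi_blaschke_pair_in_Bminus:
  assumes "\<forall>a\<in>set as. norm a \<le> 1"
  shows "\<exists>\<theta>::real. \<exists>k. 1 \<le> k \<and> k \<le> length as + 1 \<and>
    in_Bminus k (smult (exp (\<i> * of_real \<theta>)) (fst (phi (blaschke_pair as))), snd (phi (blaschke_pair as)))"
proof -
  define zs where "zs = filter (\<lambda>a. norm a < 1) as"
  define c where "c = (\<Prod>b\<leftarrow>filter (\<lambda>a. \<not> norm a < 1) as. - cnj b)"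
  have "norm c = 1"
    using assms unfolding c_def by (induction as) (auto simp: norm_mult)
  then have "c \<noteq> 0"
    by auto
  then have rot: "exp (\<i> * of_real (Arg c)) = c"
    using Arg_eq[of c] \<open>norm c = 1\<close> by simp
  have "in_Bminus (length zs + 1) (smult c ([:0, 1:] * root_poly zs), smult c (reflected_root_poly zs))"
    unfolding in_Bminus_def using \<open>c \<noteq> 0\<close>
    by (intro exI[of _ zs]) (auto simp: zs_def blaschke_pair_eq)
  moreover have "phi (blaschke_pair as) = ([:0, 1:] * root_poly zs, smult c (reflected_root_poly zs))"
    using phi_blaschke_pair[OF assms] unfolding zs_def c_def .
  ultimately have "in_Bminus (length zs + 1)
      (smult (exp (\<i> * of_real (Arg c))) (fst (phi (blaschke_pair as))), snd (phi (blaschke_pair as)))"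
    unfolding rot by simp
  moreover have "length zs \<le> length as"
    unfolding zs_def by simp
  ultimately show ?thesis
    by (intro exI[of _ "Arg c"] exI[of _ "length zs + 1"]) simp
qed

section \<open>Convergence of parameters and of coefficients\<close>

fun lists_tendsto :: "(nat \<Rightarrow> 'a::topological_space list) \<Rightarrow> 'a list \<Rightarrow> bool" where
  "lists_tendsto xs [] \<longleftrightarrow> (\<forall>n. xs n = [])"
| "lists_tendsto xs (y # ys) \<longleftrightarrow>
     (\<forall>n. xs n \<noteq> []) \<and> (\<lambda>n. hd (xs n)) \<longlonglongrightarrow> y \<and> lists_tendsto (\<lambda>n. tl (xs n)) ys"

lemma length_lists_tendsto: "lists_tendsto xs ys \<Longrightarrow> length (xs n) = length ys"
proof (induction ys arbitrary: xs)
  case (Cons y ys)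
  from Cons.prems have "xs n \<noteq> []" and tl: "lists_tendsto (\<lambda>n. tl (xs n)) ys"
    by simp_all
  moreover have "length (tl (xs n)) = length ys"
    using Cons.IH[OF tl] .
  ultimately show ?case
    by (cases "xs n") simp_all
qed simp

lemma lists_in_compact_convergent_subseq:
  fixes xs :: "nat \<Rightarrow> 'a::metric_space list"
  assumes "compact S" "\<And>n. length (xs n) = m" "\<And>n. set (xs n) \<subseteq> S"
  obtains r ys where "strict_mono r" "lists_tendsto (xs \<circ> r) ys" "set ys \<subseteq> S"
  using assms(2,3)
proof (induction m arbitrary: xs thesis)
  case 0
  show ?case
  proof (rule "0.prems"(1))
    show "lists_tendsto (xs \<circ> id) []"
      using "0.prems"(2) by simp
  qed (simp_all add: strict_mono_def)
next
  case (Suc m)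
  have nonempty: "xs n \<noteq> []" for n
    using Suc.prems(2)[of n] by auto
  have "\<forall>n. hd (xs n) \<in> S"
    using hd_in_set[OF nonempty] Suc.prems(3) by blast
  then obtain y r1 where y: "y \<in> S" "strict_mono r1" "((\<lambda>n. hd (xs n)) \<circ> r1) \<longlonglongrightarrow> y"
    by (rule seq_compactE[OF compact_imp_seq_compact[OF assms(1)]])
  obtain r2 ys where r2: "strict_mono r2" "lists_tendsto ((\<lambda>n. tl (xs (r1 n))) \<circ> r2) ys" "set ys \<subseteq> S"
  proof (rule Suc.IH)
    show "length (tl (xs (r1 n))) = m" for n
      using Suc.prems(2) by simp
    show "set (tl (xs (r1 n))) \<subseteq> S" for n
      using Suc.prems(3)[of "r1 n"] list.set_sel(2)[OF nonempty] by blast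
  qed
  have "(\<lambda>n. hd (xs (r1 (r2 n)))) \<longlonglongrightarrow> y"
    using LIMSEQ_subseq_LIMSEQ[OF y(3) r2(1)] by (simp add: o_def)
  then have "lists_tendsto (xs \<circ> (r1 \<circ> r2)) (y # ys)"
    using r2(2) nonempty by (simp add: o_def)
  moreover have "set (y # ys) \<subseteq> S"
    using y(1) r2(3) by simp
  ultimately show ?case
    using strict_mono_o[OF y(2) r2(1)] by (rule Suc.prems(1)[rotated])
qed

definition coeffs_tendsto :: "(nat \<Rightarrow> 'a::real_normed_field poly) \<Rightarrow> 'a poly \<Rightarrow> bool" where
  "coeffs_tendsto p q \<longleftrightarrow> (\<forall>i. (\<lambda>n. coeff (p n) i) \<longlonglongrightarrow> coeff q i)"

lemma coeffs_tendsto_const: "coeffs_tendsto (\<lambda>n. p) p"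
  by (simp add: coeffs_tendsto_def)

lemma coeffs_tendsto_pCons:
  "a \<longlonglongrightarrow> a0 \<Longrightarrow> coeffs_tendsto p p0 \<Longrightarrow> coeffs_tendsto (\<lambda>n. pCons (a n) (p n)) (pCons a0 p0)"
  by (auto simp: coeffs_tendsto_def coeff_pCons split: nat.split)

lemma coeffs_tendsto_mult:
  "coeffs_tendsto p p0 \<Longrightarrow> coeffs_tendsto q q0 \<Longrightarrow> coeffs_tendsto (\<lambda>n. p n * q n) (p0 * q0)"
  unfolding coeffs_tendsto_def coeff_mult by (auto intro!: tendsto_sum tendsto_mult)

lemma coeffs_tendsto_smult:
  "c \<longlonglongrightarrow> c0 \<Longrightarrow> coeffs_tendsto p p0 \<Longrightarrow> coeffs_tendsto (\<lambda>n. smult (c n) (p n)) (smult c0 p0)"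
  unfolding coeffs_tendsto_def by (auto intro!: tendsto_mult)

lemma coeffs_tendsto_linear:
  "a \<longlonglongrightarrow> a0 \<Longrightarrow> b \<longlonglongrightarrow> b0 \<Longrightarrow> coeffs_tendsto (\<lambda>n. [:a n, b n:]) [:a0, b0:]"
  by (intro coeffs_tendsto_pCons coeffs_tendsto_const)

lemma coeffs_tendsto_root_poly:
  "lists_tendsto as bs \<Longrightarrow> coeffs_tendsto (\<lambda>n. root_poly (as n)) (root_poly bs)"
proof (induction bs arbitrary: as)
  case Nil
  then show ?case
    by (simp add: coeffs_tendsto_const)
next
  case (Cons b bs)
  then have "coeffs_tendsto (\<lambda>n. [:- hd (as n), 1:] * root_poly (tl (as n))) ([:- b, 1:] * root_poly bs)"
    by (intro coeffs_tendsto_mult coeffs_tendsto_linear tendsto_intros) auto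
  moreover have "root_poly (as n) = [:- hd (as n), 1:] * root_poly (tl (as n))" for n
    using Cons.prems by (cases "as n") (simp_all add: root_poly_Cons)
  ultimately show ?case
    by (simp add: root_poly_Cons)
qed

lemma coeffs_tendsto_reflected_root_poly:
  "lists_tendsto as bs \<Longrightarrow> coeffs_tendsto (\<lambda>n. reflected_root_poly (as n)) (reflected_root_poly bs)"
proof (induction bs arbitrary: as)
  case Nil
  then show ?case
    by (simp add: coeffs_tendsto_const)
next
  case (Cons b bs)
  then have "coeffs_tendsto (\<lambda>n. [:1, - cnj (hd (as n)):] * reflected_root_poly (tl (as n)))
      ([:1, - cnj b:] * reflected_root_poly bs)"
    by (intro coeffs_tendsto_mult coeffs_tendsto_linear tendsto_intros) auto
  moreover have "reflected_root_poly (as n) = [:1, - cnj (hd (as n)):] * reflected_root_poly (tl (as n))" for n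
    using Cons.prems by (cases "as n") (simp_all add: reflected_root_poly_Cons)
  ultimately show ?case
    by (simp add: reflected_root_poly_Cons)
qed

lemma alg_conv_if_coeffs_tendsto:
  assumes "\<And>n. proj_pt d (s n)" "proj_pt d v"
    and "coeffs_tendsto (\<lambda>n. fst (s n)) (fst v)" "coeffs_tendsto (\<lambda>n. snd (s n)) (snd v)"
  shows "alg_conv d s v"
  using assms unfolding alg_conv_def coeffs_tendsto_def by (intro conjI exI[of _ "\<lambda>_. 1"]) auto

lemma proj_pt_blaschke_pair:
  assumes "d \<ge> 1" "length as = d - 1"
  shows "proj_pt d (blaschke_pair as)"
  using assms degree_reflected_root_poly_le[of as]
  by (simp add: proj_pt_def blaschke_pair_eq degree_mult_eq)

lemma blaschke_pairs_subseq_limit: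
  fixes as :: "nat \<Rightarrow> complex list"
  assumes "d \<ge> 1" and len: "\<And>n. length (as n) = d - 1" and disc: "\<And>n. \<forall>a\<in>set (as n). norm a < 1"
  shows "\<exists>r v. strict_mono r \<and> alg_conv d (\<lambda>n. blaschke_pair (as (r n))) v \<and>
    (\<exists>\<theta>::real. \<exists>k. 1 \<le> k \<and> k \<le> d \<and>
      in_Bminus k (smult (exp (\<i> * of_real \<theta>)) (fst (phi v)), snd (phi v)))"
proof -
  have "set (as n) \<subseteq> cball 0 1" for n
    using disc[of n] by auto
  then obtain r bs where r: "strict_mono r" "lists_tendsto (as \<circ> r) bs" and bs: "set bs \<subseteq> cball 0 1"
    by (rule lists_in_compact_convergent_subseq[OF compact_cball len])
  have "length bs = d - 1"
    using length_lists_tendsto[OF r(2), of 0] len by simp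
  have conv: "alg_conv d (\<lambda>n. blaschke_pair (as (r n))) (blaschke_pair bs)"
  proof (rule alg_conv_if_coeffs_tendsto)
    show "proj_pt d (blaschke_pair (as (r n)))" for n
      using \<open>d \<ge> 1\<close> len by (rule proj_pt_blaschke_pair)
    show "proj_pt d (blaschke_pair bs)"
      using \<open>d \<ge> 1\<close> \<open>length bs = d - 1\<close> by (rule proj_pt_blaschke_pair)
    show "coeffs_tendsto (\<lambda>n. fst (blaschke_pair (as (r n)))) (fst (blaschke_pair bs))"
      using coeffs_tendsto_mult[OF coeffs_tendsto_const[of "[:0, 1:]"] coeffs_tendsto_root_poly[OF r(2)]]
      by (simp add: blaschke_pair_eq o_def)
    show "coeffs_tendsto (\<lambda>n. snd (blaschke_pair (as (r n)))) (snd (blaschke_pair bs))"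
      using coeffs_tendsto_reflected_root_poly[OF r(2)] by (simp add: blaschke_pair_eq o_def)
  qed
  have "\<forall>a\<in>set bs. norm a \<le> 1"
    using bs by auto
  from rotated_phi_blaschke_pair_in_Bminus[OF this] obtain \<theta> k where k: "1 \<le> k" "k \<le> length bs + 1"
    and Bminus: "in_Bminus k (smult (exp (\<i> * of_real \<theta>)) (fst (phi (blaschke_pair bs))),
      snd (phi (blaschke_pair bs)))"
    by (elim exE conjE)
  have "k \<le> d"
    using k(2) \<open>length bs = d - 1\<close> \<open>d \<ge> 1\<close> by simp
  with r(1) conv k(1) Bminus show ?thesis
    by blast
qed

section \<open>Holomorphic functions near the unit circle\<close>

definition at_unit_circle :: "complex filter" where
  "at_unit_circle = filtercomap norm (at_left 1)"

lemma eventually_at_unit_circle: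
  "eventually P at_unit_circle \<longleftrightarrow> (\<exists>s<1. \<forall>z. s < norm z \<and> norm z < 1 \<longrightarrow> P z)"
proof
  assume "eventually P at_unit_circle"
  then obtain Q s where "s < 1" "\<And>y. s < y \<Longrightarrow> y < 1 \<Longrightarrow> Q y" "\<And>z. Q (norm z) \<Longrightarrow> P z"
    unfolding at_unit_circle_def eventually_filtercomap eventually_at_left_field by blast
  then show "\<exists>s<1. \<forall>z. s < norm z \<and> norm z < 1 \<longrightarrow> P z"
    by blast
next
  assume "\<exists>s<1. \<forall>z. s < norm z \<and> norm z < 1 \<longrightarrow> P z"
  then obtain s where "s < 1" "\<And>z. s < norm z \<Longrightarrow> norm z < 1 \<Longrightarrow> P z"
    by blast
  then show "eventually P at_unit_circle"
    unfolding at_unit_circle_def eventually_filtercomap eventually_at_left_field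
    by (intro exI[of _ "\<lambda>y. s < y \<and> y < 1"]) auto
qed

lemma eventually_in_unit_disc: "eventually (\<lambda>z. z \<in> ball 0 1) at_unit_circle"
  unfolding eventually_at_unit_circle by (intro exI[of _ 0]) auto

lemma eventually_not_in_compact_at_unit_circle:
  assumes "compact K" "K \<subseteq> ball 0 1"
  shows "eventually (\<lambda>z. z \<notin> K) at_unit_circle"
proof (cases "K = {}")
  case False
  then obtain k where k: "k \<in> K" "\<And>z. z \<in> K \<Longrightarrow> norm z \<le> norm k"
    using continuous_attains_sup[OF assms(1) False continuous_on_norm_id] by blast
  have "norm k < 1"
    using k(1) assms(2) by auto
  moreover have "z \<notin> K" if "norm k < norm z" for z
    using k(2) that by force
  ultimately show ?thesis
    unfolding eventually_at_unit_circle by blast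
qed simp

lemma tendsto_norm_at_unit_circle_if_unimodular:
  fixes f :: "complex \<Rightarrow> complex"
  assumes cont: "continuous_on (cball 0 1) f" and sphere: "\<And>z. norm z = 1 \<Longrightarrow> norm (f z) = 1"
  shows "((\<lambda>z. norm (f z)) \<longlongrightarrow> 1) at_unit_circle"
proof (rule tendstoI)
  fix e :: real
  assume "e > 0"
  define K where "K = {z \<in> cball 0 1. e \<le> dist (norm (f z)) 1}"
  have "continuous_on (cball 0 1) (\<lambda>z. dist (norm (f z)) 1)"
    by (intro continuous_on_dist continuous_on_norm continuous_on_const cont)
  then have "closed K"
    unfolding K_def by (rule continuous_on_closed_Collect_le[OF continuous_on_const _ closed_cball])
  moreover have "K \<subseteq> cball 0 1"
    by (auto simp: K_def)
  ultimately have "compact K"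
    by (metis compact_eq_bounded_closed bounded_cball bounded_subset)
  moreover have "K \<subseteq> ball 0 1"
  proof
    fix z
    assume "z \<in> K"
    then have "norm z \<le> 1" "e \<le> dist (norm (f z)) 1"
      by (auto simp: K_def)
    moreover have "norm z \<noteq> 1"
      using sphere[of z] \<open>e > 0\<close> calculation(2) by auto
    ultimately show "z \<in> ball 0 1"
      by simp
  qed
  ultimately have "eventually (\<lambda>z. z \<notin> K) at_unit_circle"
    by (rule eventually_not_in_compact_at_unit_circle)
  then show "eventually (\<lambda>z. dist (norm (f z)) 1 < e) at_unit_circle"
    using eventually_in_unit_disc by eventually_elim (simp add: K_def not_le)
qed

lemma tendsto_norm_at_unit_circle_if_proper:
  fixes f :: "complex \<Rightarrow> complex"
  assumes into: "f ` ball 0 1 \<subseteq> ball 0 1"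
    and proper: "\<forall>C. compact C \<and> C \<subseteq> ball 0 1 \<longrightarrow> compact {z \<in> ball 0 1. f z \<in> C}"
  shows "((\<lambda>z. norm (f z)) \<longlongrightarrow> 1) at_unit_circle"
proof (rule order_tendstoI)
  fix a :: real
  assume "a < 1"
  then have sub: "cball (0::complex) a \<subseteq> ball 0 1"
    by (simp add: cball_subset_ball_iff)
  have "compact {z \<in> ball 0 1. f z \<in> cball 0 a}"
    by (rule proper[rule_format, OF conjI[OF compact_cball sub]])
  then have "eventually (\<lambda>z. z \<notin> {z \<in> ball 0 1. f z \<in> cball 0 a}) at_unit_circle"
    by (rule eventually_not_in_compact_at_unit_circle) auto
  then show "eventually (\<lambda>z. a < norm (f z)) at_unit_circle"
    using eventually_in_unit_disc by eventually_elim (simp add: not_le)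
next
  fix a :: real
  assume "1 < a"
  have "norm (f z) < a" if "z \<in> ball 0 1" for z
  proof -
    have "f z \<in> ball 0 1"
      using into that by blast
    then have "norm (f z) < 1"
      by simp
    then show ?thesis
      using \<open>1 < a\<close> by linarith
  qed
  then show "eventually (\<lambda>z. norm (f z) < a) at_unit_circle"
    by (rule eventually_mono[OF eventually_in_unit_disc])
qed

lemma norm_le_if_tendsto_at_unit_circle:
  assumes hol: "h holomorphic_on ball 0 1" and lim: "((\<lambda>z. norm (h z)) \<longlongrightarrow> M) at_unit_circle"
    and z: "z \<in> ball 0 1"
  shows "norm (h z) \<le> M"
proof (rule field_le_epsilon)
  fix e :: real
  assume "e > 0"
  then have "eventually (\<lambda>w. norm (h w) < M + e) at_unit_circle"
    using order_tendstoD(2)[OF lim] by simp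
  then obtain s where "s < 1" and s: "\<And>w. s < norm w \<Longrightarrow> norm w < 1 \<Longrightarrow> norm (h w) < M + e"
    unfolding eventually_at_unit_circle by blast
  obtain m where m: "s \<le> m" "norm z \<le> m" "m < 1"
    using \<open>s < 1\<close> z by (intro that[of "max s (norm z)"]) auto
  define t where "t = (1 + m) / 2"
  have "0 \<le> m"
    using m(2) norm_ge_zero[of z] by linarith
  then have t: "0 < t" "t < 1" "s < t" "norm z < t"
    using m by (simp_all add: t_def)
  have "cball 0 t \<subseteq> ball 0 1"
    using t by auto
  then have hol_t: "h holomorphic_on cball 0 t"
    using holomorphic_on_subset[OF hol] by blast
  have "norm (h w) \<le> M + e" if "w \<in> frontier (ball 0 t)" for w
    using s[of w] that t by simp
  then show "norm (h z) \<le> M + e"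
    using maximum_modulus_frontier[of h "ball 0 t" "M + e" z] t
      holomorphic_on_subset[OF hol_t ball_subset_cball] holomorphic_on_imp_continuous_on[OF hol_t]
    by simp
qed

definition blaschke_product :: "complex list \<Rightarrow> complex \<Rightarrow> complex" where
  "blaschke_product as z = poly (root_poly as) z / poly (reflected_root_poly as) z"

lemma cnj_blaschke_product: "cnj (blaschke_product as z) = blaschke_product (map cnj as) (cnj z)"
proof -
  have "cnj (poly (root_poly as) z) = poly (root_poly (map cnj as)) (cnj z)"
    by (induction as) (simp_all add: poly_root_poly)
  moreover have "cnj (poly (reflected_root_poly as) z) = poly (reflected_root_poly (map cnj as)) (cnj z)"
    by (induction as) (simp_all add: poly_reflected_root_poly)
  ultimately show ?thesis
    by (simp add: blaschke_product_def)
qed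

lemma norm_one_minus_cnj_mult_sphere:
  assumes "norm z = 1"
  shows "norm (1 - cnj a * z) = norm (z - a)"
proof -
  have "z * cnj z = 1"
    using assms complex_norm_square[of z] by simp
  then have "1 - cnj a * z = z * cnj (z - a)"
    by (simp add: algebra_simps)
  then show ?thesis
    using assms by (simp add: norm_mult del: complex_cnj_diff)
qed

lemma norm_blaschke_product_sphere:
  assumes "\<forall>a\<in>set as. norm a < 1" "norm z = 1"
  shows "norm (blaschke_product as z) = 1"
proof -
  have "norm (poly (reflected_root_poly as) z) = norm (poly (root_poly as) z)"
    unfolding poly_reflected_root_poly poly_root_poly
    by (induction as) (simp_all add: norm_mult norm_one_minus_cnj_mult_sphere[OF assms(2)])
  moreover have "poly (reflected_root_poly as) z \<noteq> 0"
    using assms by (intro poly_reflected_root_poly_neq_0) auto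
  ultimately have "poly (root_poly as) z \<noteq> 0"
    by auto
  with \<open>poly (reflected_root_poly as) z \<noteq> 0\<close> \<open>norm (poly (reflected_root_poly as) z) = _\<close>
  show ?thesis
    by (simp add: blaschke_product_def norm_divide)
qed

lemma continuous_on_blaschke_product:
  assumes "\<forall>a\<in>set as. norm a < 1"
  shows "continuous_on (cball 0 1) (blaschke_product as)"
  unfolding blaschke_product_def
  using poly_reflected_root_poly_neq_0[OF assms] by (intro continuous_intros) auto

lemma unimodular_constant_if_tendsto_at_unit_circle:
  assumes hol: "u holomorphic_on ball 0 1" and nz: "\<And>z. z \<in> ball 0 1 \<Longrightarrow> u z \<noteq> 0"
    and lim: "((\<lambda>z. norm (u z)) \<longlongrightarrow> 1) at_unit_circle"
  obtains c where "norm c = 1" "\<And>z. z \<in> ball 0 1 \<Longrightarrow> u z = c"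
proof -
  have "((\<lambda>z. norm (inverse (u z))) \<longlongrightarrow> 1) at_unit_circle"
    using tendsto_inverse[OF lim] by (simp add: norm_inverse)
  moreover have "(\<lambda>z. inverse (u z)) holomorphic_on ball 0 1"
    using hol nz by (intro holomorphic_intros) auto
  ultimately have inverse_le: "norm (inverse (u z)) \<le> 1" if "z \<in> ball 0 1" for z
    using that by (intro norm_le_if_tendsto_at_unit_circle)
  have le: "norm (u z) \<le> 1" if "z \<in> ball 0 1" for z
    using hol lim that by (rule norm_le_if_tendsto_at_unit_circle)
  have unimodular: "norm (u z) = 1" if "z \<in> ball 0 1" for z
    using nz[OF that] le[OF that] inverse_le[OF that] by (simp add: norm_inverse inverse_le_1_iff)
  have "u constant_on ball 0 1"
    by (rule maximum_modulus_principle[OF hol open_ball connected_ball open_ball subset_refl, of 0])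
      (simp_all add: unimodular)
  then obtain c where c: "\<And>z. z \<in> ball 0 1 \<Longrightarrow> u z = c"
    unfolding constant_on_def by blast
  moreover have "norm c = 1"
    using unimodular[of 0] c[of 0] by simp
  ultimately show thesis
    using that by blast
qed

lemma blaschke_rigidity:
  assumes hol: "g holomorphic_on ball 0 1" and lim: "((\<lambda>z. norm (g z)) \<longlongrightarrow> 1) at_unit_circle"
    and as: "\<forall>a\<in>set as. norm a < 1"
    and k: "k holomorphic_on ball 0 1" "\<And>z. z \<in> ball 0 1 \<Longrightarrow> k z \<noteq> 0"
    and g: "\<And>z. z \<in> ball 0 1 \<Longrightarrow> g z = poly (root_poly as) z * k z"
  obtains c where "norm c = 1" "\<And>z. z \<in> ball 0 1 \<Longrightarrow> g z = c * blaschke_product as z"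
proof -
  define u where "u z = poly (reflected_root_poly as) z * k z" for z
  \<comment> \<open>\<open>u = g / B\<close>, continued across the zeros of \<open>B\<close>\<close>
  have den: "poly (reflected_root_poly as) z \<noteq> 0" if "z \<in> ball 0 1" for z
    using that as by (intro poly_reflected_root_poly_neq_0) auto
  have g_eq: "g z = blaschke_product as z * u z" if "z \<in> ball 0 1" for z
    using g[OF that] den[OF that] by (simp add: blaschke_product_def u_def)
  have B: "((\<lambda>z. norm (blaschke_product as z)) \<longlongrightarrow> 1) at_unit_circle"
    using continuous_on_blaschke_product[OF as] norm_blaschke_product_sphere[OF as]
    by (rule tendsto_norm_at_unit_circle_if_unimodular)
  have "((\<lambda>z. norm (g z) / norm (blaschke_product as z)) \<longlongrightarrow> 1) at_unit_circle"
    using tendsto_divide[OF lim B] by simp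
  moreover have "eventually (\<lambda>z. norm (g z) / norm (blaschke_product as z) = norm (u z)) at_unit_circle"
    using eventually_in_unit_disc order_tendstoD(1)[OF B zero_less_one]
    by eventually_elim (simp add: g_eq norm_mult)
  ultimately have "((\<lambda>z. norm (u z)) \<longlongrightarrow> 1) at_unit_circle"
    by (rule Lim_transform_eventually)
  moreover have "u holomorphic_on ball 0 1"
    unfolding u_def by (intro holomorphic_intros k(1))
  moreover have "u z \<noteq> 0" if "z \<in> ball 0 1" for z
    using den[OF that] k(2)[OF that] by (simp add: u_def)
  ultimately obtain c where "norm c = 1" "\<And>z. z \<in> ball 0 1 \<Longrightarrow> u z = c"
    using unimodular_constant_if_tendsto_at_unit_circle by metis
  with g_eq show thesis
    using that by (metis mult.commute)
qed

section \<open>Factoring out zeros\<close>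

lemma zorder_pos_if_zero:
  fixes f :: "complex \<Rightarrow> complex"
  assumes hol: "f holomorphic_on S" and S: "open S" "connected S" "b \<in> S"
    and "f b = 0" and nz: "\<exists>w\<in>S. f w \<noteq> 0"
  shows "zorder f b > 0"
proof -
  obtain w where w: "w \<in> S" "f w \<noteq> 0"
    using nz by blast
  have "eventually (\<lambda>z. f z \<noteq> 0 \<and> z \<in> S) (at b)"
    by (rule non_zero_neighbour_alt[OF hol S w])
  then have "frequently (\<lambda>z. f z \<noteq> 0) (at b)"
    by (intro eventually_frequently at_neq_bot) (auto elim: eventually_mono)
  then show ?thesis
    using zorder_pos_iff[OF hol S(1,3)] \<open>f b = 0\<close> by simp
qed

lemma zorder_mult_linear:
  fixes f g :: "complex \<Rightarrow> complex"
  assumes hol: "f holomorphic_on S" and S: "open S" "connected S" "b \<in> S"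
    and nz: "\<exists>w\<in>S. f w \<noteq> 0" and g: "\<And>z. z \<in> S \<Longrightarrow> g z = (z - a) * f z"
  shows "zorder g b = zorder f b + (if b = a then 1 else 0)"
proof -
  obtain w where w: "w \<in> S" "f w \<noteq> 0"
    using nz by blast
  have ev: "eventually (\<lambda>z. f z \<noteq> 0 \<and> z \<in> S) (at b)"
    by (rule non_zero_neighbour_alt[OF hol S w])
  have "zorder g b = zorder (\<lambda>z. (z - a) * f z) b"
    by (rule zorder_cong[OF eventually_mono[OF ev]]) (simp_all add: g)
  also have "\<dots> = zorder (\<lambda>z. z - a) b + zorder f b"
  proof (rule zorder_times_analytic)
    show "(\<lambda>z. z - a) analytic_on {b}"
      by (intro analytic_intros)
    show "f analytic_on {b}"
      unfolding analytic_at using hol S by blast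
    show "eventually (\<lambda>z. (z - a) * f z \<noteq> 0) (at b)"
      using ev eventually_neq_at_within[of a b UNIV] by eventually_elim simp
  qed
  moreover have "zorder (\<lambda>z. z - a) b = (if b = a then 1 else 0)"
  proof (cases "b = a")
    case True
    have "zorder (\<lambda>z. z - a) b = 1"
      by (rule zorder_eqI[of UNIV _ "\<lambda>_. 1"]) (simp_all add: True)
    then show ?thesis
      using True by simp
  next
    case False
    then show ?thesis
      by (simp add: zorder_eq_0I analytic_intros)
  qed
  ultimately show ?thesis
    by simp
qed

lemma sum_zorder_mult_linear:
  fixes f g :: "complex \<Rightarrow> complex"
  assumes hol: "f holomorphic_on S" and S: "open S" "connected S" and nz: "\<exists>w\<in>S. f w \<noteq> 0"
    and "a \<in> S" and g: "\<And>z. z \<in> S \<Longrightarrow> g z = (z - a) * f z" and fin: "finite {z \<in> S. g z = 0}"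
  shows "(\<Sum>z\<in>{z \<in> S. g z = 0}. zorder g z) = (\<Sum>z\<in>{z \<in> S. f z = 0}. zorder f z) + 1"
proof -
  define Z where "Z = {z \<in> S. g z = 0}"
  have "{z \<in> S. f z = 0} \<subseteq> Z" "a \<in> Z"
    using g \<open>a \<in> S\<close> by (auto simp: Z_def)
  have "(\<Sum>z\<in>Z. zorder g z) = (\<Sum>z\<in>Z. zorder f z + (if z = a then 1 else 0))"
    by (rule sum.cong) (auto simp: Z_def zorder_mult_linear[OF hol S _ nz g])
  also have "\<dots> = (\<Sum>z\<in>Z. zorder f z) + 1"
    using fin \<open>a \<in> Z\<close> by (simp add: Z_def sum.distrib)
  also have "(\<Sum>z\<in>Z. zorder f z) = (\<Sum>z\<in>{z \<in> S. f z = 0}. zorder f z)"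
  proof (rule sum.mono_neutral_right[OF fin[folded Z_def] \<open>_ \<subseteq> Z\<close>], rule ballI)
    fix z
    assume "z \<in> Z - {z \<in> S. f z = 0}"
    then have "f analytic_on {z}" "f z \<noteq> 0"
      using hol S(1) by (auto simp: Z_def analytic_at)
    then show "zorder f z = 0"
      by (rule zorder_eq_0I)
  qed
  finally show ?thesis
    by (simp add: Z_def)
qed

lemma holomorphic_factor_zeros:
  fixes g :: "complex \<Rightarrow> complex"
  assumes "g holomorphic_on S" "open S" "connected S" "\<exists>w\<in>S. g w \<noteq> 0"
    and "finite {z \<in> S. g z = 0}" "(\<Sum>z\<in>{z \<in> S. g z = 0}. zorder g z) = int N"
  obtains as k where "length as = N" "set as \<subseteq> S" "k holomorphic_on S" "\<And>z. z \<in> S \<Longrightarrow> k z \<noteq> 0"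
    "\<And>z. z \<in> S \<Longrightarrow> g z = poly (root_poly as) z * k z"
  using assms
proof (induction N arbitrary: g thesis)
  case 0
  have "{z \<in> S. g z = 0} = {}"
  proof (rule ccontr)
    assume ne: "{z \<in> S. g z = 0} \<noteq> {}"
    have "zorder g z > 0" if "z \<in> {z \<in> S. g z = 0}" for z
      using that zorder_pos_if_zero[OF "0.prems"(2-4) _ _ "0.prems"(5)] by blast
    then have "(\<Sum>z\<in>{z \<in> S. g z = 0}. zorder g z) > 0"
      by (intro sum_pos "0.prems"(6) ne)
    with "0.prems"(7) show False
      by simp
  qed
  then show ?case
    by (intro "0.prems"(1)[of "[]" g]) (use "0.prems"(2) in auto)
next
  case (Suc N)
  have "{z \<in> S. g z = 0} \<noteq> {}"
    using Suc.prems(7) by (metis of_nat_Suc of_nat_neq_0 sum.empty)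
  then obtain a where a: "a \<in> S" "g a = 0"
    by blast
  define g1 where "g1 = (\<lambda>z. if z = a then deriv g a else (g z - g a) / (z - a))"
  have hol1: "g1 holomorphic_on S"
    unfolding g1_def by (rule pole_lemma[OF Suc.prems(2)]) (simp add: interior_open[OF Suc.prems(3)] a(1))
  have g: "g z = (z - a) * g1 z" if "z \<in> S" for z
    by (cases "z = a") (simp_all add: g1_def a(2))
  have nz1: "\<exists>w\<in>S. g1 w \<noteq> 0"
    using Suc.prems(5) g by fastforce
  have "finite {z \<in> S. g1 z = 0}"
    using Suc.prems(6) by (rule finite_subset[rotated]) (auto simp: g)
  moreover have "(\<Sum>z\<in>{z \<in> S. g1 z = 0}. zorder g1 z) = int N"
    using sum_zorder_mult_linear[OF hol1 Suc.prems(3,4) nz1 a(1) g Suc.prems(6)] Suc.prems(7) by simp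
  ultimately obtain as k where IH: "length as = N" "set as \<subseteq> S" "k holomorphic_on S"
      "\<And>z. z \<in> S \<Longrightarrow> k z \<noteq> 0" "\<And>z. z \<in> S \<Longrightarrow> g1 z = poly (root_poly as) z * k z"
    using Suc.IH[OF _ hol1 Suc.prems(3,4) nz1] by blast
  have "g z = poly (root_poly (a # as)) z * k z" if "z \<in> S" for z
    using g[OF that] IH(5)[OF that] by (simp add: root_poly_Cons algebra_simps del: mult_pCons_left)
  then show ?case
    using IH a(1) by (intro Suc.prems(1)[of "a # as" k]) auto
qed

section \<open>Proper anti-holomorphic self-maps of the disc\<close>

lemma proper_antihol_deg_zeros:
  assumes "proper_antihol_deg d f"
  shows "finite {z \<in> ball 0 1. cnj (f z) = 0}"
    and "(\<Sum>z\<in>{z \<in> ball 0 1. cnj (f z) = 0}. zorder (\<lambda>z. cnj (f z)) z) = int d"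
proof -
  have "\<forall>w\<in>ball 0 1. finite {z \<in> ball 0 1. f z = w} \<and>
      (\<Sum>z\<in>{z \<in> ball 0 1. f z = w}. zorder (\<lambda>x. cnj (f x) - cnj w) z) = int d"
    using assms unfolding proper_antihol_deg_def by blast
  then have "finite {z \<in> ball 0 1. f z = 0} \<and>
      (\<Sum>z\<in>{z \<in> ball 0 1. f z = 0}. zorder (\<lambda>x. cnj (f x) - cnj 0) z) = int d"
    by (rule bspec) simp
  then show "finite {z \<in> ball 0 1. cnj (f z) = 0}"
    and "(\<Sum>z\<in>{z \<in> ball 0 1. cnj (f z) = 0}. zorder (\<lambda>z. cnj (f z)) z) = int d"
    by simp_all
qed

lemma proper_antihol_deg_blaschke_product:
  assumes "proper_antihol_deg d f"
  obtains c as where "norm c = 1" "length as = d" "\<forall>a\<in>set as. norm a < 1"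
    "\<And>z. z \<in> ball 0 1 \<Longrightarrow> f z = c * blaschke_product as (cnj z)"
proof -
  define g where "g = (\<lambda>z. cnj (f z))"
  have hol: "g holomorphic_on ball 0 1" and into: "f ` ball 0 1 \<subseteq> ball 0 1"
    and proper: "\<forall>C. compact C \<and> C \<subseteq> ball 0 1 \<longrightarrow> compact {z \<in> ball 0 1. f z \<in> C}"
    using assms unfolding proper_antihol_deg_def g_def by blast+
  have fin: "finite {z \<in> ball 0 1. g z = 0}"
    and count: "(\<Sum>z\<in>{z \<in> ball 0 1. g z = 0}. zorder g z) = int d"
    using proper_antihol_deg_zeros[OF assms] unfolding g_def .
  have "\<exists>w\<in>ball 0 1. g w \<noteq> 0"
  proof (rule ccontr)
    assume "\<not> ?thesis"
    then have "{z \<in> ball 0 1. g z = 0} = ball 0 1"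
      by auto
    then show False
      using fin finite_imp_not_open[of "ball (0::complex) 1"] by simp
  qed
  then obtain as0 k where as0: "length as0 = d" "set as0 \<subseteq> ball 0 1"
    and k: "k holomorphic_on ball 0 1" "\<And>z. z \<in> ball 0 1 \<Longrightarrow> k z \<noteq> 0"
    and factor: "\<And>z. z \<in> ball 0 1 \<Longrightarrow> g z = poly (root_poly as0) z * k z"
    using holomorphic_factor_zeros[OF hol open_ball connected_ball _ fin count] by blast
  have "((\<lambda>z. norm (g z)) \<longlongrightarrow> 1) at_unit_circle"
    using tendsto_norm_at_unit_circle_if_proper[OF into proper] by (simp add: g_def)
  moreover have disc: "\<forall>a\<in>set as0. norm a < 1"
    using as0(2) by auto
  ultimately obtain c0 where c0: "norm c0 = 1" "\<And>z. z \<in> ball 0 1 \<Longrightarrow> g z = c0 * blaschke_product as0 z"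
    using blaschke_rigidity[OF hol _ _ k factor] by blast
  show thesis
  proof (rule that[of "cnj c0" "map cnj as0"])
    show "f z = cnj c0 * blaschke_product (map cnj as0) (cnj z)" if "z \<in> ball 0 1" for z
      using arg_cong[OF c0(2)[OF that], of cnj] by (simp add: g_def cnj_blaschke_product)
  qed (use c0(1) as0(1) disc in auto)
qed

lemma anti_rat_rep_blaschke_product:
  assumes "c \<noteq> 0" "length as = d" and disc: "\<forall>a\<in>set as. norm a < 1"
    and f: "\<And>z. z \<in> ball 0 1 \<Longrightarrow> f z = c * blaschke_product as (cnj z)"
  shows "anti_rat_rep d f (smult c (root_poly as), reflected_root_poly as)"
  unfolding anti_rat_rep_def fst_conv snd_conv
proof (intro conjI ballI)
  show "coprime (smult c (root_poly as)) (reflected_root_poly as)"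
  proof (rule coprime_poly_if_no_common_root)
    fix x
    assume "poly (smult c (root_poly as)) x = 0"
    then have "x \<in> set as"
      using \<open>c \<noteq> 0\<close> by (auto simp: poly_root_poly prod_list_zero_iff)
    then show "poly (reflected_root_poly as) x \<noteq> 0"
      using disc by (intro poly_reflected_root_poly_neq_0) auto
  qed
  show "max (degree (smult c (root_poly as))) (degree (reflected_root_poly as)) = d"
    using assms(1,2) degree_reflected_root_poly_le[of as] by simp
  fix z :: complex
  assume "z \<in> ball 0 1"
  then show "poly (reflected_root_poly as) (cnj z) \<noteq> 0"
    using disc by (intro poly_reflected_root_poly_neq_0) auto
  show "f z = poly (smult c (root_poly as)) (cnj z) / poly (reflected_root_poly as) (cnj z)"
    using f[OF \<open>z \<in> ball 0 1\<close>] by (simp add: blaschke_product_def)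
qed

lemma proj_pt_smult_root_poly:
  "c \<noteq> 0 \<Longrightarrow> length as = d \<Longrightarrow> proj_pt d (smult c (root_poly as), reflected_root_poly as)"
  using degree_reflected_root_poly_le[of as] by (simp add: proj_pt_def)

lemma map_degree_pos_if_root:
  fixes p q :: "complex poly"
  assumes "p \<noteq> 0" "poly p x = 0" "poly q x \<noteq> 0"
  shows "map_degree (p, q) \<ge> 1"
proof -
  let ?g = "gcd p q"
  have "poly ?g x \<noteq> 0"
    using assms(3) by (metis dvd_trans gcd_dvd2 poly_eq_0_iff_dvd)
  moreover have p: "p = p div ?g * ?g"
    by simp
  ultimately have "poly (p div ?g) x = 0"
    using assms(2) by (metis mult_eq_0_iff poly_mult)
  moreover have "p div ?g \<noteq> 0"
    using assms(1) p by (metis mult_zero_left)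
  ultimately have "degree (p div ?g) \<noteq> 0"
    by (metis degree_0_id poly_const_conv pCons_0_0)
  then show ?thesis
    by (simp add: map_degree_def phi_def)
qed

lemma norm_le_if_hyp_dist_0_le:
  assumes "norm w < 1" "hyp_dist 0 w \<le> K"
  shows "norm w \<le> (exp K - 1) / (exp K + 1)"
proof -
  have "ln ((1 + norm w) / (1 - norm w)) \<le> K"
    using assms(2) by (simp add: hyp_dist_def Let_def)
  moreover have "(1 + norm w) / (1 - norm w) > 0"
    using assms(1) by (simp add: add_pos_nonneg)
  ultimately have "(1 + norm w) / (1 - norm w) \<le> exp K"
    by (metis exp_le_cancel_iff exp_ln)
  then have "norm w * (exp K + 1) \<le> exp K - 1"
    using assms(1) by (simp add: field_simps)
  then show ?thesis
    by (simp add: field_simps add_pos_pos)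
qed

lemma norm_0_le_if_hyp_dist_le:
  assumes "proper_antihol_deg d f" "hyp_dist 0 (f 0) \<le> K"
  shows "norm (f 0) \<le> (exp K - 1) / (exp K + 1)"
proof -
  have "f ` ball 0 1 \<subseteq> ball 0 1"
    using assms(1) by (simp add: proper_antihol_deg_def)
  then have "norm (f 0) < 1"
    by (simp add: image_subset_iff)
  then show ?thesis
    using assms(2) by (rule norm_le_if_hyp_dist_0_le)
qed

lemma proper_antihol_deg_seq_blaschke_product:
  fixes f :: "nat \<Rightarrow> complex \<Rightarrow> complex"
  assumes "\<And>n. proper_antihol_deg d (f n)"
  obtains c as where "\<And>n. norm (c n) = 1" "\<And>n. length (as n) = d" "\<And>n. \<forall>a\<in>set (as n). norm a < 1"
    "\<And>n z. z \<in> ball 0 1 \<Longrightarrow> f n z = c n * blaschke_product (as n) (cnj z)"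
proof -
  have "\<forall>n. \<exists>p. norm (fst p) = 1 \<and> length (snd p) = d \<and> (\<forall>a\<in>set (snd p). norm a < 1) \<and>
      (\<forall>z\<in>ball 0 1. f n z = fst p * blaschke_product (snd p) (cnj z))"
  proof
    fix n
    obtain c as where "norm c = 1" "length as = d" "\<forall>a\<in>set as. norm a < 1"
      "\<And>z. z \<in> ball 0 1 \<Longrightarrow> f n z = c * blaschke_product as (cnj z)"
      using proper_antihol_deg_blaschke_product[OF assms] by blast
    then show "\<exists>p. norm (fst p) = 1 \<and> length (snd p) = d \<and> (\<forall>a\<in>set (snd p). norm a < 1) \<and>
        (\<forall>z\<in>ball 0 1. f n z = fst p * blaschke_product (snd p) (cnj z))"
      by (intro exI[of _ "(c, as)"]) simp
  qed
  then obtain p where "\<And>n. norm (fst (p n)) = 1 \<and> length (snd (p n)) = d \<and>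
      (\<forall>a\<in>set (snd (p n)). norm a < 1) \<and> (\<forall>z\<in>ball 0 1. f n z = fst (p n) * blaschke_product (snd (p n)) (cnj z))"
    by (metis choice)
  then show thesis
    by (intro that[of "\<lambda>n. fst (p n)" "\<lambda>n. snd (p n)"]) simp_all
qed

lemma rotated_root_pairs_subseq_limit:
  fixes c :: "nat \<Rightarrow> complex" and as :: "nat \<Rightarrow> complex list"
  assumes c: "\<And>n. norm (c n) = 1" and len: "\<And>n. length (as n) = d"
    and disc: "\<And>n. \<forall>a\<in>set (as n). norm a \<le> 1"
  obtains r c0 bs where "strict_mono r" "norm c0 = 1" "length bs = d" "\<forall>b\<in>set bs. norm b \<le> 1"
    "coeffs_tendsto (\<lambda>n. smult (c (r n)) (root_poly (as (r n)))) (smult c0 (root_poly bs))"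
    "coeffs_tendsto (\<lambda>n. reflected_root_poly (as (r n))) (reflected_root_poly bs)"
proof -
  have "length (c n # as n) = Suc d" for n
    by (simp add: len)
  moreover have "set (c n # as n) \<subseteq> cball 0 1" for n
    using c[of n] disc[of n] by auto
  ultimately obtain r ys where r: "strict_mono r" "lists_tendsto ((\<lambda>n. c n # as n) \<circ> r) ys"
    and ys: "set ys \<subseteq> cball 0 1"
    by (rule lists_in_compact_convergent_subseq[of "cball 0 1" "\<lambda>n. c n # as n" "Suc d", OF compact_cball])
  have "length ys = Suc d"
    using length_lists_tendsto[OF r(2), of 0] len by simp
  then obtain c0 bs where ys_eq: "ys = c0 # bs"
    by (cases ys) auto
  have lim_c: "(\<lambda>n. c (r n)) \<longlonglongrightarrow> c0" and lim_as: "lists_tendsto (\<lambda>n. as (r n)) bs"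
    using r(2) unfolding ys_eq o_def by simp_all
  have "(\<lambda>n. norm (c (r n))) \<longlonglongrightarrow> norm c0"
    by (rule tendsto_norm[OF lim_c])
  then have "norm c0 = 1"
    using c by (simp add: LIMSEQ_const_iff)
  moreover have "length bs = d"
    using length_lists_tendsto[OF lim_as, of 0] len by simp
  moreover have "\<forall>b\<in>set bs. norm b \<le> 1"
    using ys by (auto simp: ys_eq)
  ultimately show thesis
    using coeffs_tendsto_smult[OF lim_c coeffs_tendsto_root_poly[OF lim_as]]
      coeffs_tendsto_reflected_root_poly[OF lim_as]
    by (intro that[OF r(1)])
qed

lemma map_degree_rotated_root_pair_pos:
  assumes "c \<noteq> 0" and bs: "\<forall>b\<in>set bs. norm b \<le> 1" and "norm (poly (root_poly bs) 0) < 1"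
  shows "map_degree (smult c (root_poly bs), reflected_root_poly bs) \<ge> 1"
proof -
  have "\<exists>b0\<in>set bs. norm b0 < 1"
  proof (rule ccontr)
    assume "\<not> ?thesis"
    then have "\<forall>b\<in>set bs. norm b = 1"
      using bs by force
    then have "norm (poly (root_poly bs) 0) = 1"
      by (induction bs) (simp_all add: poly_root_poly norm_mult)
    with assms(3) show False
      by simp
  qed
  then obtain b0 where b0: "b0 \<in> set bs" "norm b0 < 1"
    by blast
  have "1 - cnj a * b0 \<noteq> 0" if "a \<in> set bs" for a
  proof
    assume "1 - cnj a * b0 = 0"
    moreover have "1 - cnj b0 * a = cnj (1 - cnj a * b0)"
      by (simp add: mult.commute[of "cnj b0"])
    moreover have "1 - cnj b0 * a \<noteq> 0"
      using b0(2) bs that by (intro one_minus_cnj_mult_neq_0) auto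
    ultimately show False
      by simp
  qed
  then have "poly (reflected_root_poly bs) b0 \<noteq> 0"
    by (auto simp: poly_reflected_root_poly prod_list_zero_iff)
  then show ?thesis
    using \<open>c \<noteq> 0\<close> b0(1) by (intro map_degree_pos_if_root) (simp_all add: poly_root_poly prod_list_zero_iff)
qed

lemma proper_antihol_maps_subseq_limit:
  fixes f :: "nat \<Rightarrow> complex \<Rightarrow> complex" and K :: real
  assumes f: "\<And>n. proper_antihol_deg d (f n)" and K: "\<And>n. hyp_dist 0 (f n 0) \<le> K"
  shows "\<exists>pq. (\<forall>n. anti_rat_rep d (f n) (pq n)) \<and>
    (\<exists>r v. strict_mono r \<and> alg_conv d (\<lambda>n. pq (r n)) v \<and> map_degree v \<ge> 1)"
proof -
  obtain c as where c: "\<And>n. norm (c n) = 1" and len: "\<And>n. length (as n) = d"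
    and disc: "\<And>n. \<forall>a\<in>set (as n). norm a < 1"
    and fz: "\<And>n z. z \<in> ball 0 1 \<Longrightarrow> f n z = c n * blaschke_product (as n) (cnj z)"
    by (rule proper_antihol_deg_seq_blaschke_product[of d f, OF f]) blast
  have "c n \<noteq> 0" for n
    using c[of n] by auto
  define pq where "pq n = (smult (c n) (root_poly (as n)), reflected_root_poly (as n))" for n
  have rep: "anti_rat_rep d (f n) (pq n)" for n
    unfolding pq_def using \<open>c n \<noteq> 0\<close> len disc fz by (rule anti_rat_rep_blaschke_product)
  have "\<forall>a\<in>set (as n). norm a \<le> 1" for n
    using disc[of n] by auto
  then obtain r c0 bs where r: "strict_mono r" and "norm c0 = 1" "length bs = d"
    and bs: "\<forall>b\<in>set bs. norm b \<le> 1"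
    and lim_fst: "coeffs_tendsto (\<lambda>n. fst (pq (r n))) (smult c0 (root_poly bs))"
    and lim_snd: "coeffs_tendsto (\<lambda>n. snd (pq (r n))) (reflected_root_poly bs)"
    unfolding pq_def fst_conv snd_conv by (rule rotated_root_pairs_subseq_limit[OF c len])
  define v where "v = (smult c0 (root_poly bs), reflected_root_poly bs)"
  have "c0 \<noteq> 0"
    using \<open>norm c0 = 1\<close> by auto
  have conv: "alg_conv d (\<lambda>n. pq (r n)) v"
    unfolding v_def using \<open>c0 \<noteq> 0\<close> \<open>length bs = d\<close> lim_fst lim_snd
    by (intro alg_conv_if_coeffs_tendsto) (simp_all add: pq_def proj_pt_smult_root_poly \<open>c _ \<noteq> 0\<close> len)
  have "poly (reflected_root_poly xs) 0 = 1" for xs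
    by (induction xs) (simp_all add: poly_reflected_root_poly)
  then have "coeff (fst (pq n)) 0 = f n 0" for n
    using fz[of 0 n] by (simp add: pq_def blaschke_product_def poly_0_coeff_0)
  then have "(\<lambda>n. f (r n) 0) \<longlonglongrightarrow> c0 * poly (root_poly bs) 0"
    using lim_fst[unfolded coeffs_tendsto_def, rule_format, of 0] by (simp add: poly_0_coeff_0)
  then have "norm (c0 * poly (root_poly bs) 0) \<le> (exp K - 1) / (exp K + 1)"
    by (rule LIMSEQ_le_const2[OF tendsto_norm]) (use norm_0_le_if_hyp_dist_le[OF f K] in blast)
  also have "\<dots> < 1"
    by (simp add: add_pos_pos)
  finally have "map_degree v \<ge> 1"
    unfolding v_def using \<open>c0 \<noteq> 0\<close> bs \<open>norm c0 = 1\<close>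
    by (intro map_degree_rotated_root_pair_pos) (simp_all add: norm_mult)
  with rep r conv show ?thesis
    by blast
qed

theorem lemma2p6:
  fixes d :: nat
  assumes "d \<ge> 1"
  shows "(\<forall>as :: nat \<Rightarrow> complex list.
            (\<forall>n. length (as n) = d - 1 \<and> (\<forall>a\<in>set (as n). norm a < 1)) \<longrightarrow>
            (\<exists>r v. strict_mono r \<and> alg_conv d (\<lambda>n. blaschke_pair (as (r n))) v \<and>
               (\<exists>\<theta>::real. \<exists>k. 1 \<le> k \<and> k \<le> d \<and>
                  in_Bminus k (smult (exp (\<i> * of_real \<theta>)) (fst (phi v)), snd (phi v)))))
       \<and> (\<forall>K::real. \<forall>f :: nat \<Rightarrow> complex \<Rightarrow> complex. K \<ge> 0 \<longrightarrow>
            (\<forall>n. proper_antihol_deg d (f n) \<and> hyp_dist 0 (f n 0) \<le> K) \<longrightarrow>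
            (\<exists>pq. (\<forall>n. anti_rat_rep d (f n) (pq n)) \<and>
               (\<exists>r v. strict_mono r \<and> alg_conv d (\<lambda>n. pq (r n)) v \<and> map_degree v \<ge> 1)))"
proof (intro conjI allI impI)
  fix as :: "nat \<Rightarrow> complex list"
  assume "\<forall>n. length (as n) = d - 1 \<and> (\<forall>a\<in>set (as n). norm a < 1)"
  then show "\<exists>r v. strict_mono r \<and> alg_conv d (\<lambda>n. blaschke_pair (as (r n))) v \<and>
      (\<exists>\<theta>::real. \<exists>k. 1 \<le> k \<and> k \<le> d \<and>
        in_Bminus k (smult (exp (\<i> * of_real \<theta>)) (fst (phi v)), snd (phi v)))"
    by (intro blaschke_pairs_subseq_limit[OF assms]) simp_all
next
  fix K :: real and f :: "nat \<Rightarrow> complex \<Rightarrow> complex"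
  assume "K \<ge> 0" and "\<forall>n. proper_antihol_deg d (f n) \<and> hyp_dist 0 (f n 0) \<le> K"
  then show "\<exists>pq. (\<forall>n. anti_rat_rep d (f n) (pq n)) \<and>
      (\<exists>r v. strict_mono r \<and> alg_conv d (\<lambda>n. pq (r n)) v \<and> map_degree v \<ge> 1)"
    by (intro proper_antihol_maps_subseq_limit[of d f K]) simp_all
qed

end
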